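(* Let $n\ge 5$ be an integer and let $\mathcal{H}$ be a Berge-$K_4$-saturated $3$-graph on $n$ vertices with the minimum number of hyperedges (among all such $3$-graphs on $n$ vertices). Suppose there is a vertex $v_1\in V(\mathcal{H})$ with $d_{\mathcal{H}}(v_1)=3$ such that every pair $(v_i,v_j)\in N^d_{\mathcal{H}}(v_1)$ is good and the pair $(v_1,v_k)$ is good for every $v_k\in N_{\mathcal{H}}(v_1)$. Then there exist four vertices $v_2,v_3,v_4,v_5$ such that $\mathcal{H}[\{v_1,v_2,v_3,v_4,v_5\}]$ contains a copy of $\mathcal{C}^3_5$.
   Context: A $3$-graph has all hyperedges of size $3$. A $3$-graph contains a Berge-$K_4$ if there are $4$ distinct vertices and $6$ distinct hyperedges, one containing each of the $6$ pairs of these vertices. $\mathcal{H}$ is Berge-$K_4$-saturated if it contains no Berge-$K_4$ but adding any $3$-set not already a hyperedge creates a Berge-$K_4$. For distinct vertices $u,v$, the pair $(u,v)$ is good if there exist distinct vertices $x,y\notin\{u,v\}$ and five distinct hyperedges of $\mathcal{H}$ containing respectively $\{u,x\},\{u,y\},\{v,x\},\{v,y\},\{x,y\}$; otherwise it is bad. $d_{\mathcal{H}}(v)$ is the number of hyperedges containing $v$; $N^d_{\mathcal{H}}(v)=\{(v_i,v_j): vv_iv_j\in E(\mathcal{H})\}$; $N_{\mathcal{H}}(v)$ is the set of vertices $w\neq v$ lying in a common hyperedge with $v$. $\mathcal{C}^3_5$ is the tight $3$-uniform $5$-cycle with vertices $w_1,\dots,w_5$ and hyperedges $w_iw_{i+1}w_{i+2}$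 ($i\in\{1,\dots,5\}$, indices mod $5$). *)

theory Defs
  imports Main
begin

definition three_graph :: "'a set \<Rightarrow> 'a set set \<Rightarrow> bool" where
  "three_graph V E \<longleftrightarrow> finite V \<and> (\<forall>e\<in>E. e \<subseteq> V \<and> card e = 3)"

definition berge_K4 :: "'a set set \<Rightarrow> bool" where
  "berge_K4 E \<longleftrightarrow> (\<exists>a b c d. distinct [a, b, c, d] \<and>
     (\<exists>f. inj_on f {{a,b},{a,c},{a,d},{b,c},{b,d},{c,d}} \<and>
          (\<forall>p\<in>{{a,b},{a,c},{a,d},{b,c},{b,d},{c,d}}. f p \<in> E \<and> p \<subseteq> f p)))"

definition berge_K4_saturated :: "'a set \<Rightarrow> 'a set set \<Rightarrow> bool" where
  "berge_K4_saturated V E \<longleftrightarrow> three_graph V E \<and> \<not> berge_K4 E \<and>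
     (\<forall>T. T \<subseteq> V \<and> card T = 3 \<and> T \<notin> E \<longrightarrow> berge_K4 (insert T E))"

definition good_pair :: "'a set set \<Rightarrow> 'a \<Rightarrow> 'a \<Rightarrow> bool" where
  "good_pair E u v \<longleftrightarrow> (\<exists>x y. distinct [u, v, x, y] \<and>
     (\<exists>e1 e2 e3 e4 e5. distinct [e1, e2, e3, e4, e5] \<and>
        e1 \<in> E \<and> e2 \<in> E \<and> e3 \<in> E \<and> e4 \<in> E \<and> e5 \<in> E \<and>
        {u, x} \<subseteq> e1 \<and> {u, y} \<subseteq> e2 \<and> {v, x} \<subseteq> e3 \<and> {v, y} \<subseteq> e4 \<and> {x, y} \<subseteq> e5))"

definition hdeg :: "'a set set \<Rightarrow> 'a \<Rightarrow> nat" where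
  "hdeg E v = card {e \<in> E. v \<in> e}"

definition link_pairs :: "'a set set \<Rightarrow> 'a \<Rightarrow> ('a \<times> 'a) set" where
  "link_pairs E v = {(x, y). {v, x, y} \<in> E}"

definition hneighbors :: "'a set set \<Rightarrow> 'a \<Rightarrow> 'a set" where
  "hneighbors E v = {w. w \<noteq> v \<and> (\<exists>e\<in>E. v \<in> e \<and> w \<in> e)}"

definition contains_C35 :: "'a set set \<Rightarrow> 'a set \<Rightarrow> bool" where
  "contains_C35 E S \<longleftrightarrow> (\<exists>w :: nat \<Rightarrow> 'a. inj_on w {0..<5} \<and> w ` {0..<5} \<subseteq> S \<and>
     (\<forall>i<5. {w i, w ((i + 1) mod 5), w ((i + 2) mod 5)} \<in> E))"

end

theory Submission
  imports Defs
begin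

text \<open>
  The link of \<open>v\<^sub>1\<close> (the pairs \<open>pq\<close> with \<open>v\<^sub>1pq \<in> E\<close>) has three edges. In a
  Berge-\<open>K\<^sub>4\<close>-free 3-graph every edge through a good pair \<open>(u, w)\<close> contains one of its
  witnesses \<open>x, y\<close>: otherwise it would be a sixth edge completing a Berge-\<open>K\<^sub>4\<close> on
  \<open>u, w, x, y\<close>. For a link edge \<open>pq\<close> this makes \<open>v\<^sub>1\<close> itself a witness, so no link
  edge is isolated; for \<open>(v\<^sub>1, a)\<close> it shows that \<open>a\<close> is not in all three edges at
  \<open>v\<^sub>1\<close>. Hence the link is a triangle or a path \<open>abcd\<close>. The witnesses of the link
  pairs provide edges avoiding \<open>v\<^sub>1\<close> that cover the three pairs of a link triple;
  together with the edges at \<open>v\<^sub>1\<close> they form a Berge-\<open>K\<^sub>4\<close> unless the triple is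
  itself an edge. This excludes the triangle, and for the path it forces \<open>abd, acd \<in> E\<close>,
  closing the tight cycle \<open>v\<^sub>1badc\<close>.
\<close>

lemma berge_K4I:
  assumes "distinct [a, b, c, d]" and "distinct [E1, E2, E3, E4, E5, E6]"
    and "E1 \<in> E" "E2 \<in> E" "E3 \<in> E" "E4 \<in> E" "E5 \<in> E" "E6 \<in> E"
    and "{a, b} \<subseteq> E1" "{a, c} \<subseteq> E2" "{a, d} \<subseteq> E3"
    and "{b, c} \<subseteq> E4" "{b, d} \<subseteq> E5" "{c, d} \<subseteq> E6"
  shows "berge_K4 E"
proof -
  let ?pairs = "[{a, b}, {a, c}, {a, d}, {b, c}, {b, d}, {c, d}]"
  define f where "f p = (if p = {a, b} then E1 else if p = {a, c} then E2
    else if p = {a, d} then E3 else if p = {b, c} then E4 else if p = {b, d} then E5 else E6)"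
    for p
  have "distinct ?pairs"
    using assms(1) by (simp add: doubleton_eq_iff)
  then have "map f ?pairs = [E1, E2, E3, E4, E5, E6]"
    unfolding f_def by (simp add: eq_commute)
  with assms(2) \<open>distinct ?pairs\<close> have "inj_on f (set ?pairs)"
    by (simp add: distinct_map)
  moreover have "\<forall>p \<in> set ?pairs. f p \<in> E \<and> p \<subseteq> f p"
    using assms(3-) \<open>map f ?pairs = _\<close> by simp
  ultimately show ?thesis
    unfolding berge_K4_def using assms(1)
    by (intro exI[of _ a] exI[of _ b] exI[of _ c] exI[of _ d] exI[of _ f] conjI) simp_all
qed

lemma card_3_eqI:
  assumes "card e = 3" "a \<in> e" "b \<in> e" "c \<in> e" "distinct [a, b, c]"
  shows "e = {a, b, c}"
proof -
  have "finite e"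
    using assms(1) by (intro card_ge_0_finite) simp
  then show ?thesis
    using assms by (intro card_subset_eq[symmetric]) auto
qed

lemma card_3_through:
  assumes "card e = 3" "v \<in> e"
  obtains p q where "e = {v, p, q}" "distinct [v, p, q]"
proof -
  obtain x y z where "e = {x, y, z}" "distinct [x, y, z]"
    using assms(1) by (auto simp: card_3_iff)
  with assms(2) show thesis
    using that by (auto simp: insert_commute)
qed

lemma card_3_through_pair:
  assumes "card e = 3" "v \<in> e" "x \<in> e" "x \<noteq> v"
  obtains t where "e = {v, x, t}" "distinct [v, x, t]"
proof -
  obtain p q where "e = {v, p, q}" "distinct [v, p, q]"
    using assms(1,2) card_3_through by metis
  with assms(3,4) show thesis
    using that by (auto simp: insert_commute)
qed

lemma card_3_obtain_third:
  assumes "card S = 3" "x \<in> S" "y \<in> S" "x \<noteq> y"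
  obtains z where "S = {x, y, z}"
proof -
  have "card (S - {x, y}) = 1"
    using assms by (simp add: card_Diff_subset)
  then obtain z where "S - {x, y} = {z}"
    by (auto simp: card_1_singleton_iff)
  with assms(2,3) show thesis
    using that by blast
qed

lemma good_pair_witnessE:
  assumes K4_free: "\<not> berge_K4 E" and "good_pair E u w"
  obtains x y e1 e2 e3 e4 e5 where "distinct [u, w, x, y]" "distinct [e1, e2, e3, e4, e5]"
    "e1 \<in> E" "e2 \<in> E" "e3 \<in> E" "e4 \<in> E" "e5 \<in> E"
    "{u, x} \<subseteq> e1" "{u, y} \<subseteq> e2" "{w, x} \<subseteq> e3" "{w, y} \<subseteq> e4" "{x, y} \<subseteq> e5"
    "\<forall>e \<in> E. u \<in> e \<and> w \<in> e \<longrightarrow> x \<in> e \<or> y \<in> e"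
proof -
  obtain x y e1 e2 e3 e4 e5 where w: "distinct [u, w, x, y]" "distinct [e1, e2, e3, e4, e5]"
    "e1 \<in> E" "e2 \<in> E" "e3 \<in> E" "e4 \<in> E" "e5 \<in> E"
    "{u, x} \<subseteq> e1" "{u, y} \<subseteq> e2" "{w, x} \<subseteq> e3" "{w, y} \<subseteq> e4" "{x, y} \<subseteq> e5"
    using \<open>good_pair E u w\<close> unfolding good_pair_def by (elim exE conjE) (rule that)
  have "\<forall>e \<in> E. u \<in> e \<and> w \<in> e \<longrightarrow> x \<in> e \<or> y \<in> e"
  proof (intro ballI impI, rule ccontr)
    fix e assume e: "e \<in> E" "u \<in> e \<and> w \<in> e"
    assume "\<not> (x \<in> e \<or> y \<in> e)"
    then have "e \<notin> {e1, e2, e3, e4, e5}"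
      using w by blast
    then have "distinct [e, e1, e2, e3, e4, e5]"
      using w(2) by simp
    then have "berge_K4 E"
      using w e by (intro berge_K4I[of u w x y e e1 e2 e3 e4 e5]) simp_all
    with K4_free show False ..
  qed
  with w show thesis by (rule that)
qed

lemma link_good_pair_witnessE:
  assumes K4_free: "\<not> berge_K4 E" and "good_pair E p q"
    and "{v, p, q} \<in> E" "distinct [v, p, q]"
  obtains y e1 e2 e3 e4 e5 where "distinct [p, q, v, y]" "distinct [e1, e2, e3, e4, e5]"
    "e1 \<in> E" "e2 \<in> E" "e3 \<in> E" "e4 \<in> E" "e5 \<in> E"
    "{p, v} \<subseteq> e1" "{p, y} \<subseteq> e2" "{q, v} \<subseteq> e3" "{q, y} \<subseteq> e4" "{v, y} \<subseteq> e5"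
proof -
  obtain x y e1 e2 e3 e4 e5 where w: "distinct [p, q, x, y]" "distinct [e1, e2, e3, e4, e5]"
    "e1 \<in> E" "e2 \<in> E" "e3 \<in> E" "e4 \<in> E" "e5 \<in> E"
    "{p, x} \<subseteq> e1" "{p, y} \<subseteq> e2" "{q, x} \<subseteq> e3" "{q, y} \<subseteq> e4" "{x, y} \<subseteq> e5"
    and meets: "\<forall>e \<in> E. p \<in> e \<and> q \<in> e \<longrightarrow> x \<in> e \<or> y \<in> e"
    using K4_free \<open>good_pair E p q\<close> by (rule good_pair_witnessE)
  have "x \<in> {v, p, q} \<or> y \<in> {v, p, q}"
    using bspec[OF meets \<open>{v, p, q} \<in> E\<close>] by simp
  with w(1) consider "x = v" | "y = v"
    by auto
  then show thesis
  proof cases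
    case 1
    with w show thesis
      by (intro that[of y e1 e2 e3 e4 e5]) simp_all
  next
    case 2
    with w show thesis
      by (intro that[of x e2 e1 e4 e3 e5]) (use w(1,2) in \<open>auto simp: insert_commute\<close>)
  qed
qed

lemma hdeg_le_2_if_good_pair_in_all_edges:
  assumes K4_free: "\<not> berge_K4 E" and uniform: "\<And>e. e \<in> E \<Longrightarrow> card e = 3"
    and "good_pair E v a" and in_all: "\<forall>e \<in> E. v \<in> e \<longrightarrow> a \<in> e"
  shows "hdeg E v \<le> 2"
proof -
  obtain x y where "distinct [v, a, x, y]"
    and meets: "\<forall>e \<in> E. v \<in> e \<and> a \<in> e \<longrightarrow> x \<in> e \<or> y \<in> e"
    by (rule good_pair_witnessE[OF K4_free \<open>good_pair E v a\<close>], rule that)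
  have "{e \<in> E. v \<in> e} \<subseteq> {{v, a, x}, {v, a, y}}"
  proof
    fix e assume "e \<in> {e \<in> E. v \<in> e}"
    then have "e \<in> E" "v \<in> e" "a \<in> e" "x \<in> e \<or> y \<in> e"
      using in_all meets by auto
    then show "e \<in> {{v, a, x}, {v, a, y}}"
      using card_3_eqI[OF uniform] \<open>distinct [v, a, x, y]\<close> by auto
  qed
  then have "hdeg E v \<le> card {{v, a, x}, {v, a, y}}"
    unfolding hdeg_def by (rule card_mono[rotated]) simp
  also have "\<dots> \<le> 2"
    by (simp add: card_insert_if)
  finally show ?thesis .
qed

lemma berge_K4_apex:
  assumes "distinct [v, p, q, r]" and "distinct [V1, V2, V3]" "V1 \<in> E" "V2 \<in> E" "V3 \<in> E"
    and "{v, p} \<subseteq> V1" "{v, q} \<subseteq> V2" "{v, r} \<subseteq> V3"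
    and "distinct [X, Y, Z]" "X \<in> E" "Y \<in> E" "Z \<in> E" "v \<notin> X" "v \<notin> Y" "v \<notin> Z"
    and "{p, q} \<subseteq> X" "{p, r} \<subseteq> Y" "{q, r} \<subseteq> Z"
  shows "berge_K4 E"
proof (rule berge_K4I[of v p q r V1 V2 V3 X Y Z])
  show "distinct [V1, V2, V3, X, Y, Z]"
    using assms(2,6-9,13-15) by auto
qed (use assms in simp_all)

lemma contains_C35I:
  assumes "distinct [w0, w1, w2, w3, w4]"
    and "{w0, w1, w2} \<in> E" "{w1, w2, w3} \<in> E" "{w2, w3, w4} \<in> E"
    and "{w3, w4, w0} \<in> E" "{w4, w0, w1} \<in> E"
  shows "contains_C35 E {w0, w1, w2, w3, w4}"
proof -
  let ?w = "(!) [w0, w1, w2, w3, w4]"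
  have "inj_on ?w {0..<5}"
    using assms(1) by (intro inj_on_nth) auto
  moreover have "?w ` {0..<5} \<subseteq> {w0, w1, w2, w3, w4}"
    by (auto simp: less_Suc_eq numeral_eq_Suc)
  moreover have "{?w i, ?w ((i + 1) mod 5), ?w ((i + 2) mod 5)} \<in> E" if "i < 5" for i
  proof -
    have "i = 0 \<or> i = 1 \<or> i = 2 \<or> i = 3 \<or> i = 4"
      using that by auto
    then show ?thesis
      using assms(2-) by (elim disjE) simp_all
  qed
  ultimately show ?thesis
    unfolding contains_C35_def by blast
qed

locale good_degree_3_vertex =
  fixes E :: "'a set set" and v :: 'a
  assumes K4_free: "\<not> berge_K4 E"
    and uniform: "\<And>e. e \<in> E \<Longrightarrow> card e = 3"
    and degree_3: "hdeg E v = 3"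
    and link_pairs_good: "\<forall>(p, q) \<in> link_pairs E v. good_pair E p q"
    and neighbors_good: "\<forall>k \<in> hneighbors E v. good_pair E v k"
begin

lemma link_good: "{v, p, q} \<in> E \<Longrightarrow> good_pair E p q"
  using link_pairs_good by (auto simp: link_pairs_def)

lemma card_star: "card {e \<in> E. v \<in> e} = 3"
  using degree_3 by (simp add: hdeg_def)

lemma star_distinct: "{e \<in> E. v \<in> e} = {X, Y, Z} \<Longrightarrow> distinct [X, Y, Z]"
  using card_star by (intro card_distinct) simp

lemma star_eqI:
  assumes "distinct [X, Y, Z]" "X \<in> E" "Y \<in> E" "Z \<in> E" "v \<in> X" "v \<in> Y" "v \<in> Z"
  shows "{e \<in> E. v \<in> e} = {X, Y, Z}"
proof -
  have "finite {e \<in> E. v \<in> e}"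
    using card_star by (intro card_ge_0_finite) simp
  moreover have "{X, Y, Z} \<subseteq> {e \<in> E. v \<in> e}"
    using assms(2-) by simp
  moreover have "card {X, Y, Z} = card {e \<in> E. v \<in> e}"
    using assms(1) card_star by simp
  ultimately show ?thesis
    by (intro card_subset_eq[symmetric])
qed

lemma star_edges:
  assumes "{e \<in> E. v \<in> e} = {X, Y, Z}"
  shows "X \<in> E" "Y \<in> E" "Z \<in> E" "v \<in> X" "v \<in> Y" "v \<in> Z"
  using assms by (metis (no_types, lifting) insertCI mem_Collect_eq)+

lemma hneighbors_star:
  assumes "{e \<in> E. v \<in> e} = {X, Y, Z}"
  shows "hneighbors E v = X \<union> Y \<union> Z - {v}"
proof -
  have "hneighbors E v = \<Union> {e \<in> E. v \<in> e} - {v}"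
    unfolding hneighbors_def by blast
  then show ?thesis
    unfolding assms by (simp add: Un_assoc)
qed

lemma apex_triangle_closes:
  assumes star: "{e \<in> E. v \<in> e} = {V1, V2, V3}"
    and "distinct [v, p, q, r]" "p \<in> V1" "q \<in> V2" "r \<in> V3"
    and "X \<in> E" "Y \<in> E" "Z \<in> E" "v \<notin> X" "v \<notin> Y" "v \<notin> Z"
    and "{p, q} \<subseteq> X" "{p, r} \<subseteq> Y" "{q, r} \<subseteq> Z"
  shows "{p, q, r} \<in> E"
proof (rule ccontr)
  assume "{p, q, r} \<notin> E"
  then have "W \<in> E \<Longrightarrow> \<not> {p, q, r} \<subseteq> W" for W
    using card_3_eqI[OF uniform, of W p q r] \<open>distinct [v, p, q, r]\<close> by auto
  then have "distinct [X, Y, Z]"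
    using assms(6-8,12-14) by auto
  with assms(2-) star_edges[OF star] star_distinct[OF star] have "berge_K4 E"
    by (intro berge_K4_apex[of v p q r V1 V2 V3]) simp_all
  with K4_free show False ..
qed

lemma link_edge_adjacent:
  assumes "e \<in> E" "v \<in> e"
  obtains e' x where "e' \<in> E" "e \<noteq> e'" "v \<in> e'" "x \<noteq> v" "x \<in> e" "x \<in> e'"
proof -
  obtain p q where e: "e = {v, p, q}" "distinct [v, p, q]"
    using card_3_through[OF uniform] assms by metis
  with assms(1) have link_edge: "{v, p, q} \<in> E"
    by simp
  obtain y e1 e2 e3 e4 e5 where w: "distinct [p, q, v, y]" "distinct [e1, e2, e3, e4, e5]"
    "e1 \<in> E" "e2 \<in> E" "e3 \<in> E" "e4 \<in> E" "e5 \<in> E"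
    "{p, v} \<subseteq> e1" "{p, y} \<subseteq> e2" "{q, v} \<subseteq> e3" "{q, y} \<subseteq> e4" "{v, y} \<subseteq> e5"
    by (rule link_good_pair_witnessE[OF K4_free link_good[OF link_edge] link_edge e(2)])
  show thesis
  proof (cases "e1 = e")
    case True
    with w have "e3 \<noteq> e"
      by auto
    with w e show thesis
      by (intro that[of e3 q]) auto
  next
    case False
    with w e show thesis
      by (intro that[of e1 p]) auto
  qed
qed

lemma link_pair_avoiding_witnessE:
  assumes "{v, p, q} \<in> E" "distinct [v, p, q]"
  obtains y F G where "y \<in> hneighbors E v" "y \<notin> {p, q}"
    "F \<in> E" "G \<in> E" "F \<noteq> G" "v \<notin> F" "v \<notin> G" "{p, y} \<subseteq> F" "{q, y} \<subseteq> G"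
proof -
  obtain y e1 e2 e3 e4 e5 where w: "distinct [p, q, v, y]" "distinct [e1, e2, e3, e4, e5]"
    "e1 \<in> E" "e2 \<in> E" "e3 \<in> E" "e4 \<in> E" "e5 \<in> E"
    "{p, v} \<subseteq> e1" "{p, y} \<subseteq> e2" "{q, v} \<subseteq> e3" "{q, y} \<subseteq> e4" "{v, y} \<subseteq> e5"
    by (rule link_good_pair_witnessE[OF K4_free link_good[OF assms(1)] assms])
  have star: "{e \<in> E. v \<in> e} = {e1, e3, e5}"
    using w by (intro star_eqI) simp_all
  have "e2 \<notin> {e1, e3, e5}" "e4 \<notin> {e1, e3, e5}"
    using w(2) by auto
  then have "v \<notin> e2" "v \<notin> e4"
    unfolding star[symmetric] using w(4,6) by auto
  moreover have "y \<in> hneighbors E v"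
    using w(1,7,12) unfolding hneighbors_def by auto
  ultimately show thesis
    using w by (intro that[of y e2 e4]) auto
qed

lemma link_triangle_side_edges:
  assumes star: "{e \<in> E. v \<in> e} = {{v, a, b}, {v, b, c}, {v, a, c}}" and "distinct [v, a, b, c]"
  obtains F G where "F \<in> E" "G \<in> E" "F \<noteq> G" "v \<notin> F" "v \<notin> G" "{a, c} \<subseteq> F" "{b, c} \<subseteq> G"
proof -
  have "distinct [v, a, b]"
    using assms(2) by simp
  then obtain y F G where "y \<in> hneighbors E v" "y \<notin> {a, b}"
    "F \<in> E" "G \<in> E" "F \<noteq> G" "v \<notin> F" "v \<notin> G" "{a, y} \<subseteq> F" "{b, y} \<subseteq> G"
    by (rule link_pair_avoiding_witnessE[OF star_edges(1)[OF star]])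
  moreover from this have "y = c"
    unfolding hneighbors_star[OF star] by auto
  ultimately show thesis
    using that by blast
qed

lemma link_not_triangle:
  assumes star: "{e \<in> E. v \<in> e} = {{v, a, b}, {v, b, c}, {v, a, c}}" and "distinct [v, a, b, c]"
  shows False
proof -
  obtain Xac Xbc where X: "Xac \<in> E" "Xbc \<in> E" "Xac \<noteq> Xbc" "v \<notin> Xac" "v \<notin> Xbc"
    "{a, c} \<subseteq> Xac" "{b, c} \<subseteq> Xbc"
    by (rule link_triangle_side_edges[OF star assms(2)])
  have "{e \<in> E. v \<in> e} = {{v, b, c}, {v, c, a}, {v, b, a}}"
    using star by (simp add: insert_commute)
  moreover have "distinct [v, b, c, a]"
    using assms(2) by auto
  ultimately obtain Yab Yac where Y: "Yab \<in> E" "Yac \<in> E" "Yab \<noteq> Yac" "v \<notin> Yab" "v \<notin> Yac"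
    "{b, a} \<subseteq> Yab" "{c, a} \<subseteq> Yac"
    by (rule link_triangle_side_edges)
  have "{e \<in> E. v \<in> e} = {{v, a, c}, {v, c, b}, {v, a, b}}"
    using star by (simp add: insert_commute)
  moreover have "distinct [v, a, c, b]"
    using assms(2) by auto
  ultimately obtain Zab Zbc where Z: "Zab \<in> E" "Zbc \<in> E" "Zab \<noteq> Zbc" "v \<notin> Zab" "v \<notin> Zbc"
    "{a, b} \<subseteq> Zab" "{c, b} \<subseteq> Zbc"
    by (rule link_triangle_side_edges)
  let ?T = "{a, b, c}"
  have different: "P \<noteq> Q" if "P \<in> E" "P \<noteq> ?T" "?T \<subseteq> P \<union> Q" for P Q
    using card_3_eqI[OF uniform, of P a b c] that assms(2) by auto
  have apex: "berge_K4 E" if "distinct [P, Q, R]" "P \<in> E" "Q \<in> E" "R \<in> E"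
    "v \<notin> P" "v \<notin> Q" "v \<notin> R" "{a, b} \<subseteq> P" "{a, c} \<subseteq> Q" "{b, c} \<subseteq> R" for P Q R
    using that star_edges[OF star] assms(2) star_distinct[OF star]
    by (intro berge_K4_apex[of v a b c "{v, a, b}" "{v, b, c}" "{v, a, c}" E P Q R]) simp_all
  have "Yab = ?T \<and> Zab = ?T"
  proof (rule ccontr)
    assume "\<not> (Yab = ?T \<and> Zab = ?T)"
    then obtain P where "P \<in> E" "v \<notin> P" "{a, b} \<subseteq> P" "P \<noteq> ?T"
      using Y(1,4,6) Z(1,4,6) by blast
    moreover have "distinct [P, Xac, Xbc]"
      using different[of P Xac] different[of P Xbc] calculation X(3,6,7) by auto
    ultimately have "berge_K4 E"
      using X by (intro apex[of P Xac Xbc]) simp_all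
    with K4_free show False ..
  qed
  then have "distinct [?T, Yac, Zbc]"
    using different[of Yac Zbc] Y(2,3,7) Z(3,7) by auto
  then have "berge_K4 E"
    using Y Z \<open>Yab = ?T \<and> Zab = ?T\<close> by (intro apex[of ?T Yac Zbc]) simp_all
  with K4_free show False ..
qed

lemma link_path_side_edges:
  assumes star: "{e \<in> E. v \<in> e} = {{v, a, b}, {v, b, c}, {v, c, d}}" and "distinct [v, a, b, c, d]"
  obtains C F where "C \<in> E" "F \<in> E" "C \<noteq> F" "v \<notin> C" "v \<notin> F" "{a, b} \<subseteq> C" "{a, c} \<subseteq> F"
proof -
  note edges = star_edges[OF star]
  have through_v: "e \<in> {{v, a, b}, {v, b, c}, {v, c, d}}" if "e \<in> E" "v \<in> e" for e
    using that unfolding star[symmetric] by simp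
  have "good_pair E v b"
    using neighbors_good hneighbors_star[OF star] assms(2) by auto
  then obtain x y e1 e2 e3 e4 e5 where w: "distinct [v, b, x, y]" "distinct [e1, e2, e3, e4, e5]"
    "e1 \<in> E" "e2 \<in> E" "e3 \<in> E" "e4 \<in> E" "e5 \<in> E"
    "{v, x} \<subseteq> e1" "{v, y} \<subseteq> e2" "{b, x} \<subseteq> e3" "{b, y} \<subseteq> e4" "{x, y} \<subseteq> e5"
    and meets: "\<forall>e \<in> E. v \<in> e \<and> b \<in> e \<longrightarrow> x \<in> e \<or> y \<in> e"
    by (rule good_pair_witnessE[OF K4_free])
  have "a \<in> {x, y}" "c \<in> {x, y}"
    using bspec[OF meets edges(1)] bspec[OF meets edges(2)] w(1) by auto
  with assms(2) w(1) consider "x = a" "y = c" | "x = c" "y = a"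
    by auto
  moreover have avoid_v: "v \<notin> C \<and> v \<notin> F"
    if "A \<in> E" "{v, a} \<subseteq> A" "C \<in> E" "A \<noteq> C" "{a, b} \<subseteq> C" "F \<in> E" "{a, c} \<subseteq> F"
    for A C F
  proof -
    have "A = {v, a, b}"
      using through_v[of A] that(1,2) assms(2) by auto
    then have "v \<notin> C"
      using through_v[of C] that(3-5) assms(2) by auto
    moreover have "v \<notin> F"
      using through_v[of F] that(6,7) assms(2) by auto
    ultimately show ?thesis ..
  qed
  ultimately show thesis
  proof cases
    case 1
    with w avoid_v[of e1 e3 e5] show thesis
      by (intro that[of e3 e5]) (simp_all add: insert_commute)
  next
    case 2
    with w avoid_v[of e2 e4 e5] show thesis
      by (intro that[of e4 e5]) (simp_all add: insert_commute)
  qed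
qed

lemma link_path_closes:
  assumes star: "{e \<in> E. v \<in> e} = {{v, a, b}, {v, b, c}, {v, c, d}}" and "distinct [v, a, b, c, d]"
  shows "{a, b, d} \<in> E" "{a, c, d} \<in> E"
proof -
  note edges = star_edges[OF star]
  obtain Cab Fac where ab_ac: "Cab \<in> E" "Fac \<in> E" "Cab \<noteq> Fac" "v \<notin> Cab" "v \<notin> Fac"
    "{a, b} \<subseteq> Cab" "{a, c} \<subseteq> Fac"
    by (rule link_path_side_edges[OF star assms(2)])
  have "{e \<in> E. v \<in> e} = {{v, d, c}, {v, c, b}, {v, b, a}}"
    unfolding star by (simp add: insert_commute)
  moreover have "distinct [v, d, c, b, a]"
    using assms(2) by auto
  ultimately obtain Ccd Fbd where cd_bd: "Ccd \<in> E" "Fbd \<in> E" "v \<notin> Ccd" "v \<notin> Fbd"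
    "{c, d} \<subseteq> Ccd" "{b, d} \<subseteq> Fbd"
    by (rule link_path_side_edges) (simp_all add: insert_commute)
  have "distinct [v, a, b]"
    using assms(2) by simp
  then obtain y F G where y: "y \<in> hneighbors E v" "y \<notin> {a, b}"
    and FG: "F \<in> E" "G \<in> E" "v \<notin> F" "v \<notin> G" "{a, y} \<subseteq> F" "{b, y} \<subseteq> G"
    by (rule link_pair_avoiding_witnessE[OF edges(1)])
  then have "y = c \<or> y = d"
    unfolding hneighbors_star[OF star] by auto
  have "y \<noteq> c"
  proof
    assume "y = c"
    with assms(2) FG cd_bd have "{b, c, d} \<in> E"
      by (intro apex_triangle_closes[OF star, of b c d G Fbd Ccd]) (simp_all add: insert_commute)
    moreover have "distinct [Cab, Fac, {b, c, d}]"
      using ab_ac assms(2) by auto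
    ultimately have "berge_K4 E"
      using assms(2) ab_ac edges star_distinct[OF star]
      by (intro berge_K4_apex[of v a b c "{v, a, b}" "{v, b, c}" "{v, c, d}" E Cab Fac "{b, c, d}"]) simp_all
    with K4_free show False ..
  qed
  with \<open>y = c \<or> y = d\<close> have "y = d"
    by simp
  show "{a, b, d} \<in> E"
    using assms(2) ab_ac FG \<open>y = d\<close> by (intro apex_triangle_closes[OF star, of a b d Cab F G]) simp_all
  show "{a, c, d} \<in> E"
    using assms(2) ab_ac FG cd_bd \<open>y = d\<close> by (intro apex_triangle_closes[OF star, of a c d Fac F Ccd]) simp_all
qed

lemma link_path_C35:
  assumes star: "{e \<in> E. v \<in> e} = {{v, a, b}, {v, b, c}, {v, c, d}}" and "distinct [v, a, b, c, d]"
  shows "contains_C35 E {v, b, a, d, c}"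
proof -
  note star_edges[OF star]
  moreover have "{a, b, d} \<in> E" "{a, c, d} \<in> E"
    by (rule link_path_closes[OF assms])+
  moreover have "{v, b, a} = {v, a, b}" "{b, a, d} = {a, b, d}" "{a, d, c} = {a, c, d}"
    "{d, c, v} = {v, c, d}" "{c, v, b} = {v, b, c}"
    by auto
  moreover have "distinct [v, b, a, d, c]"
    using assms(2) by auto
  ultimately show ?thesis
    by (intro contains_C35I) simp_all
qed

lemma link_not_star:
  assumes "q \<in> hneighbors E v"
  obtains e where "e \<in> E" "v \<in> e" "q \<notin> e"
proof (rule ccontr)
  assume "\<not> thesis"
  with that have "\<forall>e \<in> E. v \<in> e \<longrightarrow> q \<in> e"
    by blast
  with K4_free uniform bspec[OF neighbors_good assms] have "hdeg E v \<le> 2"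
    by (rule hdeg_le_2_if_good_pair_in_all_edges)
  with degree_3 show False
    by simp
qed

lemma link_chain_C35:
  assumes star: "{e \<in> E. v \<in> e} = {{v, p, q}, {v, q, r}, {v, r, t}}"
    and "distinct [v, p, q, r]" "t \<notin> {v, q, r}"
  shows "\<exists>v2 v3 v4 v5. contains_C35 E {v, v2, v3, v4, v5}"
proof (cases "t = p")
  case True
  with star have "{e \<in> E. v \<in> e} = {{v, p, q}, {v, q, r}, {v, p, r}}"
    by (simp add: insert_commute)
  with assms(2) show ?thesis
    using link_not_triangle by blast
next
  case False
  with assms(2,3) have "distinct [v, p, q, r, t]"
    by auto
  with star have "contains_C35 E {v, q, p, t, r}"
    by (rule link_path_C35)
  then show ?thesis
    by blast
qed

lemma adjacent_link_edges_C35: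
  assumes star: "{e \<in> E. v \<in> e} = {{v, p, q}, {v, q, r}, Z}" and "distinct [v, p, q, r]"
  shows "\<exists>v2 v3 v4 v5. contains_C35 E {v, v2, v3, v4, v5}"
proof -
  have through_v: "e \<in> {{v, p, q}, {v, q, r}, Z}" if "e \<in> E" "v \<in> e" for e
    using that unfolding star[symmetric] by simp
  note edges = star_edges[OF star]
  have "q \<in> hneighbors E v"
    unfolding hneighbors_star[OF star] using assms(2) by auto
  then obtain e where "e \<in> E" "v \<in> e" "q \<notin> e"
    by (rule link_not_star)
  then have "q \<notin> Z"
    using through_v[of e] by auto
  obtain W x where "W \<in> E" "Z \<noteq> W" "v \<in> W" "x \<noteq> v" "x \<in> Z" "x \<in> W"
    by (rule link_edge_adjacent[OF edges(3) edges(6)])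
  with through_v \<open>q \<notin> Z\<close> have "x = p \<or> x = r"
    by fastforce
  obtain t where Z: "Z = {v, x, t}" "distinct [v, x, t]"
    by (rule card_3_through_pair[OF uniform[OF edges(3)] edges(6) \<open>x \<in> Z\<close> \<open>x \<noteq> v\<close>])
  with \<open>q \<notin> Z\<close> have "t \<noteq> q"
    by auto
  from \<open>x = p \<or> x = r\<close> show ?thesis
  proof
    assume "x = r"
    with star Z have "{e \<in> E. v \<in> e} = {{v, p, q}, {v, q, r}, {v, r, t}}"
      by simp
    moreover have "t \<notin> {v, q, r}"
      using Z(2) \<open>x = r\<close> \<open>t \<noteq> q\<close> by auto
    ultimately show ?thesis
      by (rule link_chain_C35[OF _ assms(2)])
  next
    assume "x = p"
    with star Z have "{e \<in> E. v \<in> e} = {{v, r, q}, {v, q, p}, {v, p, t}}"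
      by (simp add: insert_commute)
    moreover have "distinct [v, r, q, p]" "t \<notin> {v, q, p}"
      using assms(2) Z(2) \<open>x = p\<close> \<open>t \<noteq> q\<close> by auto
    ultimately show ?thesis
      by (rule link_chain_C35)
  qed
qed

theorem exists_C35: "\<exists>v2 v3 v4 v5. contains_C35 E {v, v2, v3, v4, v5}"
proof -
  have "{e \<in> E. v \<in> e} \<noteq> {}"
    using card_star by (intro notI) simp
  then obtain X where "X \<in> E" "v \<in> X"
    by blast
  then obtain Y x where "Y \<in> E" "X \<noteq> Y" "v \<in> Y" "x \<noteq> v" "x \<in> X" "x \<in> Y"
    by (rule link_edge_adjacent)
  obtain p where X: "X = {v, x, p}" "distinct [v, x, p]"
    by (rule card_3_through_pair[OF uniform[OF \<open>X \<in> E\<close>] \<open>v \<in> X\<close> \<open>x \<in> X\<close> \<open>x \<noteq> v\<close>])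
  obtain r where Y: "Y = {v, x, r}" "distinct [v, x, r]"
    by (rule card_3_through_pair[OF uniform[OF \<open>Y \<in> E\<close>] \<open>v \<in> Y\<close> \<open>x \<in> Y\<close> \<open>x \<noteq> v\<close>])
  have "X \<in> {e \<in> E. v \<in> e}" "Y \<in> {e \<in> E. v \<in> e}"
    using \<open>X \<in> E\<close> \<open>v \<in> X\<close> \<open>Y \<in> E\<close> \<open>v \<in> Y\<close> by simp_all
  then obtain Z where "{e \<in> E. v \<in> e} = {X, Y, Z}"
    using \<open>X \<noteq> Y\<close> by (rule card_3_obtain_third[OF card_star])
  then have "{e \<in> E. v \<in> e} = {{v, p, x}, {v, x, r}, Z}"
    by (simp add: X Y insert_commute)
  moreover have "distinct [v, p, x, r]"
    using X Y \<open>X \<noteq> Y\<close> by auto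
  ultimately show ?thesis
    by (rule adjacent_link_edges_C35)
qed

end

theorem lemma3p2:
  fixes V :: "'a set" and E :: "'a set set" and n :: nat and v1 :: 'a
  assumes "n \<ge> 5" and "card V = n"
    and "berge_K4_saturated V E"
    and "\<forall>(V' :: 'a set) E'. card V' = n \<and> berge_K4_saturated V' E' \<longrightarrow> card E \<le> card E'"
    and "v1 \<in> V" and "hdeg E v1 = 3"
    and "\<forall>(vi, vj) \<in> link_pairs E v1. good_pair E vi vj"
    and "\<forall>vk \<in> hneighbors E v1. good_pair E v1 vk"
  shows "\<exists>v2 v3 v4 v5. contains_C35 E {v1, v2, v3, v4, v5}"
proof -
  have "\<not> berge_K4 E" "\<And>e. e \<in> E \<Longrightarrow> card e = 3"
    using assms(3) unfolding berge_K4_saturated_def three_graph_def by auto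
  with assms(6-8) interpret good_degree_3_vertex E v1
    by unfold_locales
  show ?thesis
    by (rule exists_C35)
qed

end
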